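(* Let $n\ge 2$. For $k\ge 1$ let $E_k$ be the $k\times k$ identity matrix (and $E_0$ the empty matrix). Define integer matrices $X_m$ of size $\frac{m(m-1)}{2}\times m$ for $m\ge 2$ inductively by $X_2=\begin{pmatrix}1&-1\end{pmatrix}$ and, for $m>2$, $X_m=\begin{pmatrix}\mathbf{1}& -E_{m-1}\\ \mathbf{0} & X_{m-1}\end{pmatrix}$, where $\mathbf{1}$ is the all-ones column vector of length $m-1$ and $\mathbf{0}$ is the zero column vector of length $\frac{(m-1)(m-2)}{2}$. Let \[ A_n=\begin{pmatrix}-E_n & -{}^tX_n\\ -X_n & -nE_{n(n-1)/2}\end{pmatrix}, \] a square integer matrix of size $n+\frac{n(n-1)}{2}$. Then the Smith normal form of $A_n$ over $\mathbb{Z}$ is \[ E_{2n-2}\oplus nE_{(n-2)(n-3)/2}\oplus O, \] where $O$ is the zero matrix (necessarily square of size $n-1$).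
   Context: ${}^tM$ denotes the transpose of $M$, and $D_1\oplus D_2\oplus D_3$ denotes the block-diagonal matrix with diagonal blocks $D_1,D_2,D_3$. (The matrix $A_n$ is the weighted incidence matrix of the plumbing graph obtained from the complete graph on $n$ vertices by giving each original vertex weight $-1$, inserting a vertex of weight $-n$ on each edge, with the two resulting half-edges signed $-$ and $+$.) *)

theory Defs
  imports "Jordan_Normal_Form.Matrix"
begin

definition in_smith_form :: "int mat \<Rightarrow> bool" where
  "in_smith_form D \<longleftrightarrow>
     (\<forall>i < dim_row D. \<forall>j < dim_col D. i \<noteq> j \<longrightarrow> D $$ (i, j) = 0) \<and>
     (\<forall>i < min (dim_row D) (dim_col D). D $$ (i, i) \<ge> 0) \<and>
     (\<forall>i. Suc i < min (dim_row D) (dim_col D) \<longrightarrow> D $$ (i, i) dvd D $$ (Suc i, Suc i))"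

definition is_smith_normal_form_of :: "int mat \<Rightarrow> int mat \<Rightarrow> bool" where
  "is_smith_normal_form_of A D \<longleftrightarrow>
     dim_row D = dim_row A \<and> dim_col D = dim_col A \<and> in_smith_form D \<and>
     (\<exists>P Q. P \<in> carrier_mat (dim_row A) (dim_row A) \<and>
            Q \<in> carrier_mat (dim_col A) (dim_col A) \<and>
            invertible_mat P \<and> invertible_mat Q \<and> P * A * Q = D)"

text \<open>X_aux k is the matrix X_(k+2) of the paper.\<close>
primrec X_aux :: "nat \<Rightarrow> int mat" where
  "X_aux 0 = mat 1 2 (\<lambda>(i, j). if j = 0 then 1 else -1)"
| "X_aux (Suc k) =
     four_block_mat (mat (k + 2) 1 (\<lambda>_. 1)) (- (1\<^sub>m (k + 2)))
                    (0\<^sub>m ((k + 2) * (k + 1) div 2) 1) (X_aux k)"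

definition X_mat :: "nat \<Rightarrow> int mat" where
  "X_mat m = X_aux (m - 2)"

definition A_mat :: "nat \<Rightarrow> int mat" where
  "A_mat n = four_block_mat (- (1\<^sub>m n)) (- transpose_mat (X_mat n))
                            (- X_mat n) (- (int n \<cdot>\<^sub>m 1\<^sub>m (n * (n - 1) div 2)))"

definition snf_target :: "nat \<Rightarrow> int mat" where
  "snf_target n = mat (n + n * (n - 1) div 2) (n + n * (n - 1) div 2)
     (\<lambda>(i, j). if i = j then
                 (if i < 2 * n - 2 then 1
                  else if i < 2 * n - 2 + (n - 2) * (n - 3) div 2 then int n
                  else 0)
               else 0)"

end

(*
  Up to sign, A_n = [I, X^T; X, n I] with X = X_n, so eliminating the identity block leaves
  the Schur complement n I - X X^T.  Writing X_n = [1, -I; 0, X_(n-1)] and using that X_(n-1)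
  has zero row sums and Gram matrix (n-1) I - J, two more block eliminations reduce the
  complement to [0, 0; X_(n-1), n I].  The incidence matrix X_(n-1) of the complete graph is
  equivalent to diag(I_(n-2), 0); transporting this equivalence past the block n I and letting
  the n-2 unit pivots clear the matching part of n I gives
  A_n ~ diag(I_n, I_(n-2), n I_((n-2)(n-3)/2), 0_(n-1)).
*)
theory Submission
  imports Defs
begin

lemma uminus_zero_mat [simp]: "- 0\<^sub>m r c = (0\<^sub>m r c :: 'a :: group_add mat)"
  by (rule eq_matI) auto

lemma add_uminus_self_mat [simp]: "A + - A = (0\<^sub>m (dim_row A) (dim_col A) :: 'a :: group_add mat)"
  by (rule eq_matI) auto

abbreviation ones_mat :: "nat \<Rightarrow> nat \<Rightarrow> 'a :: one mat" where
  "ones_mat r c \<equiv> mat r c (\<lambda>_. 1)"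

lemma ones_mat_mult: "ones_mat r s * ones_mat s c = (of_nat s :: 'a :: semiring_1) \<cdot>\<^sub>m ones_mat r c"
  by (intro eq_matI) (auto simp: scalar_prod_def)

lemma transpose_ones_mat: "transpose_mat (ones_mat r c) = ones_mat c r"
  by (rule eq_matI) auto

section \<open>Equivalence of matrices\<close>

definition equivalent_mat :: "'a :: comm_ring_1 mat \<Rightarrow> 'a mat \<Rightarrow> bool" where
  "equivalent_mat A B \<longleftrightarrow>
     (\<exists>P Q. P \<in> carrier_mat (dim_row A) (dim_row A) \<and> Q \<in> carrier_mat (dim_col A) (dim_col A) \<and>
            invertible_mat P \<and> invertible_mat Q \<and> P * A * Q = B)"

lemma invertible_matI:
  assumes "P \<in> carrier_mat n n" "P' \<in> carrier_mat n n" "P * P' = 1\<^sub>m n" "P' * P = 1\<^sub>m n"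
  shows "invertible_mat P"
  using assms unfolding invertible_mat_def inverts_mat_def by auto

lemma invertible_matE:
  assumes P: "P \<in> carrier_mat n n" and "invertible_mat P"
  obtains P' where "P' \<in> carrier_mat n n" "P * P' = 1\<^sub>m n" "P' * P = 1\<^sub>m n"
proof -
  obtain P' where P': "P * P' = 1\<^sub>m n" "P' * P = 1\<^sub>m (dim_row P')"
    using assms unfolding invertible_mat_def inverts_mat_def by auto
  have "dim_row P' = n"
    using arg_cong[OF P'(2), of dim_col] P by simp
  moreover have "dim_col P' = n"
    using arg_cong[OF P'(1), of dim_col] by simp
  ultimately show thesis
    using that P' by auto
qed

lemma invertible_mat_mult:
  assumes P: "P \<in> carrier_mat n n" and Q: "Q \<in> carrier_mat n n"
    and "invertible_mat P" "invertible_mat Q"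
  shows "invertible_mat (P * Q)"
proof -
  obtain P' where P': "P' \<in> carrier_mat n n" "P * P' = 1\<^sub>m n" "P' * P = 1\<^sub>m n"
    using P \<open>invertible_mat P\<close> by (rule invertible_matE)
  obtain Q' where Q': "Q' \<in> carrier_mat n n" "Q * Q' = 1\<^sub>m n" "Q' * Q = 1\<^sub>m n"
    using Q \<open>invertible_mat Q\<close> by (rule invertible_matE)
  have "P * Q * (Q' * P') = P * (Q * (Q' * P'))"
    using P Q P' Q' by (simp add: assoc_mult_mat[of P n n Q n _ n])
  also have "Q * (Q' * P') = (Q * Q') * P'"
    by (rule assoc_mult_mat[OF Q Q'(1) P'(1), symmetric])
  finally have right_inverse: "P * Q * (Q' * P') = 1\<^sub>m n"
    using P P' Q' by simp
  have "Q' * P' * (P * Q) = Q' * (P' * (P * Q))"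
    using P Q P' Q' by (simp add: assoc_mult_mat[of Q' n n P' n _ n])
  also have "P' * (P * Q) = (P' * P) * Q"
    by (rule assoc_mult_mat[OF P'(1) P Q, symmetric])
  finally have left_inverse: "Q' * P' * (P * Q) = 1\<^sub>m n"
    using Q Q' P' by simp
  show ?thesis
    using right_inverse left_inverse P Q P' Q' by (intro invertible_matI[of _ n "Q' * P'"]) auto
qed

lemma invertible_one_mat: "invertible_mat (1\<^sub>m n)"
  by (rule invertible_matI[of _ n "1\<^sub>m n"]) auto

lemma equivalent_matI:
  assumes "A \<in> carrier_mat r c" "P \<in> carrier_mat r r" "Q \<in> carrier_mat c c"
    "invertible_mat P" "invertible_mat Q"
  shows "equivalent_mat A (P * A * Q)"
  using assms unfolding equivalent_mat_def by blast

lemma equivalent_mat_refl: "equivalent_mat A A"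
  using equivalent_matI[of A "dim_row A" "dim_col A" "1\<^sub>m (dim_row A)" "1\<^sub>m (dim_col A)"]
  by (simp add: invertible_one_mat)

lemma equivalent_mat_trans [trans]:
  assumes "equivalent_mat A B" "equivalent_mat B C"
  shows "equivalent_mat A C"
proof -
  let ?r = "dim_row A" and ?c = "dim_col A"
  obtain P Q where P: "P \<in> carrier_mat ?r ?r" "invertible_mat P"
    and Q: "Q \<in> carrier_mat ?c ?c" "invertible_mat Q" and B: "B = P * A * Q"
    using assms(1) unfolding equivalent_mat_def by auto
  then have "dim_row B = ?r" "dim_col B = ?c" by auto
  then obtain P' Q' where P': "P' \<in> carrier_mat ?r ?r" "invertible_mat P'"
    and Q': "Q' \<in> carrier_mat ?c ?c" "invertible_mat Q'" and C: "C = P' * B * Q'"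
    using assms(2) unfolding equivalent_mat_def by auto
  have A: "A \<in> carrier_mat ?r ?c" by auto
  have "C = P' * (P * A * Q) * Q'"
    unfolding C B ..
  also have "\<dots> = P' * (P * A * Q * Q')"
    using A P Q P' Q' by (meson assoc_mult_mat mult_carrier_mat)
  also have "P * A * Q * Q' = P * A * (Q * Q')"
    using A P Q Q' by (meson assoc_mult_mat mult_carrier_mat)
  also have "P' * (P * A * (Q * Q')) = P' * (P * A) * (Q * Q')"
    using A P Q P' Q' by (meson assoc_mult_mat[symmetric] mult_carrier_mat)
  also have "P' * (P * A) = P' * P * A"
    using A P P' by (meson assoc_mult_mat[symmetric])
  finally show ?thesis
    using P Q P' Q' by (auto intro!: equivalent_matI invertible_mat_mult)
qed

lemma equivalent_mat_mult_left:
  assumes "A \<in> carrier_mat r c" "P \<in> carrier_mat r r" "invertible_mat P"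
  shows "equivalent_mat A (P * A)"
  using equivalent_matI[OF assms(1,2) one_carrier_mat assms(3) invertible_one_mat] assms by simp

lemma equivalent_mat_mult_right:
  assumes "A \<in> carrier_mat r c" "Q \<in> carrier_mat c c" "invertible_mat Q"
  shows "equivalent_mat A (A * Q)"
  using equivalent_matI[OF assms(1) one_carrier_mat assms(2) invertible_one_mat assms(3)] assms by simp

lemma equivalent_mat_uminus:
  fixes A :: "'a :: comm_ring_1 mat"
  assumes A: "A \<in> carrier_mat r c"
  shows "equivalent_mat A (- A)"
proof -
  have "invertible_mat (- 1\<^sub>m r :: 'a mat)"
    by (rule invertible_matI[of _ r "- 1\<^sub>m r"]) auto
  then show ?thesis
    using equivalent_mat_mult_left[OF A, of "- 1\<^sub>m r"] A by simp
qed

section \<open>Block operations\<close>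

lemma invertible_lower_block_mat:
  fixes Y :: "'a :: comm_ring_1 mat"
  assumes Y: "Y \<in> carrier_mat r2 r1"
  shows "invertible_mat (four_block_mat (1\<^sub>m r1) (0\<^sub>m r1 r2) Y (1\<^sub>m r2))"
proof (rule invertible_matI)
  let ?L = "\<lambda>Z. four_block_mat (1\<^sub>m r1) (0\<^sub>m r1 r2) Z (1\<^sub>m r2)"
  have "?L Z * ?L Z' = ?L (Z + Z')" if "Z \<in> carrier_mat r2 r1" "Z' \<in> carrier_mat r2 r1" for Z Z' :: "'a mat"
    using that by (subst mult_four_block_mat[OF one_carrier_mat zero_carrier_mat that(1) one_carrier_mat
          one_carrier_mat zero_carrier_mat that(2) one_carrier_mat]) (auto simp: comm_add_mat[of Z'])
  then show "?L Y * ?L (- Y) = 1\<^sub>m (r1 + r2)" "?L (- Y) * ?L Y = 1\<^sub>m (r1 + r2)"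
    using Y by simp_all
qed (use Y in auto)

lemma invertible_upper_block_mat:
  fixes Y :: "'a :: comm_ring_1 mat"
  assumes Y: "Y \<in> carrier_mat r1 r2"
  shows "invertible_mat (four_block_mat (1\<^sub>m r1) Y (0\<^sub>m r2 r1) (1\<^sub>m r2))"
proof (rule invertible_matI)
  let ?U = "\<lambda>Z. four_block_mat (1\<^sub>m r1) Z (0\<^sub>m r2 r1) (1\<^sub>m r2)"
  have "?U Z * ?U Z' = ?U (Z + Z')" if "Z \<in> carrier_mat r1 r2" "Z' \<in> carrier_mat r1 r2" for Z Z' :: "'a mat"
    using that by (subst mult_four_block_mat[OF one_carrier_mat that(1) zero_carrier_mat one_carrier_mat
          one_carrier_mat that(2) zero_carrier_mat one_carrier_mat]) auto
  then show "?U Y * ?U (- Y) = 1\<^sub>m (r1 + r2)" "?U (- Y) * ?U Y = 1\<^sub>m (r1 + r2)"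
    using Y by simp_all
qed (use Y in auto)

context
  fixes A B C D :: "'a :: comm_ring_1 mat" and r1 r2 c1 c2 :: nat
  assumes A: "A \<in> carrier_mat r1 c1" and B: "B \<in> carrier_mat r1 c2"
    and C: "C \<in> carrier_mat r2 c1" and D: "D \<in> carrier_mat r2 c2"
begin

lemma equivalent_mat_add_rows_down:
  assumes Y: "Y \<in> carrier_mat r2 r1"
  shows "equivalent_mat (four_block_mat A B C D) (four_block_mat A B (C + Y * A) (D + Y * B))"
proof -
  have "four_block_mat (1\<^sub>m r1) (0\<^sub>m r1 r2) Y (1\<^sub>m r2) * four_block_mat A B C D
      = four_block_mat A B (C + Y * A) (D + Y * B)"
    using A B C D Y
    by (subst mult_four_block_mat[OF one_carrier_mat zero_carrier_mat Y one_carrier_mat A B C D])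
      (auto simp: comm_add_mat[of _ r2])
  then show ?thesis
    using equivalent_mat_mult_left invertible_lower_block_mat[OF Y] A D Y
    by (metis four_block_carrier_mat one_carrier_mat)
qed

lemma equivalent_mat_add_rows_up:
  assumes Y: "Y \<in> carrier_mat r1 r2"
  shows "equivalent_mat (four_block_mat A B C D) (four_block_mat (A + Y * C) (B + Y * D) C D)"
proof -
  have "four_block_mat (1\<^sub>m r1) Y (0\<^sub>m r2 r1) (1\<^sub>m r2) * four_block_mat A B C D
      = four_block_mat (A + Y * C) (B + Y * D) C D"
    using A B C D Y
    by (subst mult_four_block_mat[OF one_carrier_mat Y zero_carrier_mat one_carrier_mat A B C D]) auto
  then show ?thesis
    using equivalent_mat_mult_left invertible_upper_block_mat[OF Y] A D Y
    by (metis four_block_carrier_mat one_carrier_mat)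
qed

lemma equivalent_mat_add_cols_right:
  assumes Y: "Y \<in> carrier_mat c1 c2"
  shows "equivalent_mat (four_block_mat A B C D) (four_block_mat A (B + A * Y) C (D + C * Y))"
proof -
  have "four_block_mat A B C D * four_block_mat (1\<^sub>m c1) Y (0\<^sub>m c2 c1) (1\<^sub>m c2)
      = four_block_mat A (B + A * Y) C (D + C * Y)"
    using A B C D Y
    by (subst mult_four_block_mat[OF A B C D one_carrier_mat Y zero_carrier_mat one_carrier_mat])
      (auto simp: comm_add_mat[of _ r1 c2] comm_add_mat[of _ r2 c2])
  then show ?thesis
    using equivalent_mat_mult_right invertible_upper_block_mat[OF Y] A D Y
    by (metis four_block_carrier_mat one_carrier_mat)
qed

lemma equivalent_mat_add_cols_left:
  assumes Y: "Y \<in> carrier_mat c2 c1"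
  shows "equivalent_mat (four_block_mat A B C D) (four_block_mat (A + B * Y) B (C + D * Y) D)"
proof -
  have "four_block_mat A B C D * four_block_mat (1\<^sub>m c1) (0\<^sub>m c1 c2) Y (1\<^sub>m c2)
      = four_block_mat (A + B * Y) B (C + D * Y) D"
    using A B C D Y
    by (subst mult_four_block_mat[OF A B C D one_carrier_mat zero_carrier_mat Y one_carrier_mat]) auto
  then show ?thesis
    using equivalent_mat_mult_right invertible_lower_block_mat[OF Y] A D Y
    by (metis four_block_carrier_mat one_carrier_mat)
qed

end

lemma equivalent_mat_schur_complement:
  fixes B :: "'a :: comm_ring_1 mat"
  assumes B: "B \<in> carrier_mat r c" and C: "C \<in> carrier_mat s r" and D: "D \<in> carrier_mat s c"
  shows "equivalent_mat (four_block_mat (1\<^sub>m r) B C D) (four_block_mat (1\<^sub>m r) (0\<^sub>m r c) (0\<^sub>m s r) (D - C * B))"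
proof -
  have DCB: "D - C * B \<in> carrier_mat s c"
    using B C by (simp add: minus_carrier_mat)
  have "equivalent_mat (four_block_mat (1\<^sub>m r) B C D) (four_block_mat (1\<^sub>m r) B (0\<^sub>m s r) (D - C * B))"
    using equivalent_mat_add_rows_down[OF one_carrier_mat B C D, of "- C"] B C D
    by (auto simp: minus_add_uminus_mat[of _ s c])
  also have "equivalent_mat \<dots> (four_block_mat (1\<^sub>m r) (0\<^sub>m r c) (0\<^sub>m s r) (D - C * B))"
    using equivalent_mat_add_cols_right[OF one_carrier_mat B zero_carrier_mat DCB, of "- B"] B DCB
    by auto
  finally show ?thesis .
qed

definition block_swap_mat :: "nat \<Rightarrow> nat \<Rightarrow> 'a :: comm_ring_1 mat" where
  "block_swap_mat p q = four_block_mat (0\<^sub>m q p) (1\<^sub>m q) (1\<^sub>m p) (0\<^sub>m p q)"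

lemma block_swap_mat_carrier: "block_swap_mat p q \<in> carrier_mat (q + p) (p + q)"
  unfolding block_swap_mat_def by simp

lemma block_swap_mat_mult_four_block_mat:
  assumes "A \<in> carrier_mat p c1" "B \<in> carrier_mat p c2" "C \<in> carrier_mat q c1" "D \<in> carrier_mat q c2"
  shows "block_swap_mat p q * four_block_mat A B C D = four_block_mat C D A B"
  unfolding block_swap_mat_def using assms
  by (subst mult_four_block_mat[OF zero_carrier_mat one_carrier_mat one_carrier_mat zero_carrier_mat assms])
    auto

lemma four_block_mat_mult_block_swap_mat:
  assumes "A \<in> carrier_mat r1 q" "B \<in> carrier_mat r1 p" "C \<in> carrier_mat r2 q" "D \<in> carrier_mat r2 p"
  shows "four_block_mat A B C D * block_swap_mat p q = four_block_mat B A D C"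
  unfolding block_swap_mat_def using assms
  by (subst mult_four_block_mat[OF assms zero_carrier_mat one_carrier_mat one_carrier_mat zero_carrier_mat])
    auto

lemma invertible_block_swap_mat: "invertible_mat (block_swap_mat p q :: 'a :: comm_ring_1 mat)"
proof (rule invertible_matI)
  show "block_swap_mat p q * block_swap_mat q p = (1\<^sub>m (q + p) :: 'a mat)"
    unfolding block_swap_mat_def[of q p] by (subst block_swap_mat_mult_four_block_mat) auto
  show "block_swap_mat q p * block_swap_mat p q = (1\<^sub>m (q + p) :: 'a mat)"
    unfolding block_swap_mat_def[of q p] by (subst four_block_mat_mult_block_swap_mat) (auto simp: add.commute)
  show "block_swap_mat q p \<in> carrier_mat (q + p) (q + p)"
    using block_swap_mat_carrier[of q p] by (simp add: add.commute)
qed (use block_swap_mat_carrier[of p q] in \<open>simp add: add.commute\<close>)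

lemma equivalent_mat_swap_block_rows:
  fixes A :: "'a :: comm_ring_1 mat"
  assumes "A \<in> carrier_mat p c1" "B \<in> carrier_mat p c2" "C \<in> carrier_mat q c1" "D \<in> carrier_mat q c2"
  shows "equivalent_mat (four_block_mat A B C D) (four_block_mat C D A B)"
proof -
  have "block_swap_mat p q \<in> carrier_mat (p + q) (p + q)"
    using block_swap_mat_carrier[of p q] by (simp only: add.commute)
  then have "equivalent_mat (four_block_mat A B C D) (block_swap_mat p q * four_block_mat A B C D)"
    using assms by (intro equivalent_mat_mult_left invertible_block_swap_mat) auto
  then show ?thesis
    by (simp only: block_swap_mat_mult_four_block_mat[OF assms])
qed

lemma equivalent_mat_swap_block_cols:
  fixes A :: "'a :: comm_ring_1 mat"
  assumes "A \<in> carrier_mat r1 q" "B \<in> carrier_mat r1 p" "C \<in> carrier_mat r2 q" "D \<in> carrier_mat r2 p"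
  shows "equivalent_mat (four_block_mat A B C D) (four_block_mat B A D C)"
proof -
  have "block_swap_mat p q \<in> carrier_mat (q + p) (q + p)"
    using block_swap_mat_carrier[of p q] by (simp only: add.commute)
  then have "equivalent_mat (four_block_mat A B C D) (four_block_mat A B C D * block_swap_mat p q)"
    using assms by (intro equivalent_mat_mult_right invertible_block_swap_mat) auto
  then show ?thesis
    by (simp only: four_block_mat_mult_block_swap_mat[OF assms])
qed

lemma mult_block_diag_mat:
  fixes A :: "'a :: comm_ring_1 mat"
  assumes "A \<in> carrier_mat r1 n1" "D \<in> carrier_mat r2 n2" "A' \<in> carrier_mat n1 c1" "D' \<in> carrier_mat n2 c2"
  shows "four_block_mat A (0\<^sub>m r1 n2) (0\<^sub>m r2 n1) D * four_block_mat A' (0\<^sub>m n1 c2) (0\<^sub>m n2 c1) D'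
    = four_block_mat (A * A') (0\<^sub>m r1 c2) (0\<^sub>m r2 c1) (D * D')"
  using assms
  by (subst mult_four_block_mat[OF assms(1) zero_carrier_mat zero_carrier_mat assms(2,3)
        zero_carrier_mat zero_carrier_mat assms(4)]) auto

lemma invertible_block_diag_mat:
  fixes P :: "'a :: comm_ring_1 mat"
  assumes P: "P \<in> carrier_mat p p" "invertible_mat P" and Q: "Q \<in> carrier_mat q q" "invertible_mat Q"
  shows "invertible_mat (four_block_mat P (0\<^sub>m p q) (0\<^sub>m q p) Q)"
proof -
  obtain P' where P': "P' \<in> carrier_mat p p" "P * P' = 1\<^sub>m p" "P' * P = 1\<^sub>m p"
    using invertible_matE[OF P] by blast
  obtain Q' where Q': "Q' \<in> carrier_mat q q" "Q * Q' = 1\<^sub>m q" "Q' * Q = 1\<^sub>m q"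
    using invertible_matE[OF Q] by blast
  show ?thesis
    using P Q P' Q'
    by (intro invertible_matI[of _ "p + q" "four_block_mat P' (0\<^sub>m p q) (0\<^sub>m q p) Q'"])
      (simp_all add: mult_block_diag_mat)
qed

lemma equivalent_mat_block_diag:
  fixes A :: "'a :: comm_ring_1 mat"
  assumes "equivalent_mat A A'" "equivalent_mat D D'"
    and A: "A \<in> carrier_mat r1 c1" and D: "D \<in> carrier_mat r2 c2"
  shows "equivalent_mat (four_block_mat A (0\<^sub>m r1 c2) (0\<^sub>m r2 c1) D)
    (four_block_mat A' (0\<^sub>m r1 c2) (0\<^sub>m r2 c1) D')"
proof -
  obtain P Q where P: "P \<in> carrier_mat r1 r1" "invertible_mat P" and Q: "Q \<in> carrier_mat c1 c1" "invertible_mat Q"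
    and A': "A' = P * A * Q"
    using assms(1) A unfolding equivalent_mat_def by auto
  obtain P' Q' where P': "P' \<in> carrier_mat r2 r2" "invertible_mat P'" and Q': "Q' \<in> carrier_mat c2 c2" "invertible_mat Q'"
    and D': "D' = P' * D * Q'"
    using assms(2) D unfolding equivalent_mat_def by auto
  have "four_block_mat P (0\<^sub>m r1 r2) (0\<^sub>m r2 r1) P' * four_block_mat A (0\<^sub>m r1 c2) (0\<^sub>m r2 c1) D
      * four_block_mat Q (0\<^sub>m c1 c2) (0\<^sub>m c2 c1) Q'
    = four_block_mat A' (0\<^sub>m r1 c2) (0\<^sub>m r2 c1) D'"
    using A D P P' Q Q' unfolding A' D'
    by (simp add: mult_block_diag_mat[of _ r1 r1 _ r2 r2])
      (simp add: mult_block_diag_mat[of _ r1 c1 _ r2 c2])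
  then show ?thesis
    using A D P P' Q Q'
    by (metis equivalent_matI four_block_carrier_mat invertible_block_diag_mat)
qed

lemma equivalent_mat_scalar_block_cong:
  fixes Y :: "'a :: comm_ring_1 mat"
  assumes "equivalent_mat Y Y'" and Y: "Y \<in> carrier_mat a m"
  shows "equivalent_mat (four_block_mat (c \<cdot>\<^sub>m 1\<^sub>m a) Y (0\<^sub>m m a) (0\<^sub>m m m))
    (four_block_mat (c \<cdot>\<^sub>m 1\<^sub>m a) Y' (0\<^sub>m m a) (0\<^sub>m m m))"
proof -
  obtain P Q where P: "P \<in> carrier_mat a a" "invertible_mat P" and Q: "Q \<in> carrier_mat m m" "invertible_mat Q"
    and Y': "Y' = P * Y * Q"
    using assms(1) Y unfolding equivalent_mat_def by auto
  obtain P' where P': "P' \<in> carrier_mat a a" "P * P' = 1\<^sub>m a" "P' * P = 1\<^sub>m a"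
    using invertible_matE[OF P] by blast
  let ?M = "four_block_mat (c \<cdot>\<^sub>m 1\<^sub>m a) Y (0\<^sub>m m a) (0\<^sub>m m m)"
  let ?L = "four_block_mat P (0\<^sub>m a m) (0\<^sub>m m a) (1\<^sub>m m)"
  let ?R = "four_block_mat P' (0\<^sub>m a m) (0\<^sub>m m a) Q"
  have "?L * ?M = four_block_mat (c \<cdot>\<^sub>m P) (P * Y) (0\<^sub>m m a) (0\<^sub>m m m)"
    using P Y by (subst mult_four_block_mat[of _ a a _ m _ m]) (auto simp: mult_smult_distrib)
  also have "\<dots> * ?R = four_block_mat (c \<cdot>\<^sub>m 1\<^sub>m a) Y' (0\<^sub>m m a) (0\<^sub>m m m)"
    using P P' Q Y unfolding Y'
    by (subst mult_four_block_mat[of _ a a _ m _ m]) (auto simp: mult_smult_assoc_mat[of _ a a])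
  moreover have "invertible_mat ?L"
    using P by (intro invertible_block_diag_mat) (auto simp: invertible_one_mat)
  moreover have "invertible_mat ?R"
    using P P' Q by (intro invertible_block_diag_mat invertible_matI[of P' a P]) auto
  ultimately show ?thesis
    using equivalent_matI[of ?M "a + m" "a + m" ?L ?R] P P' Q Y by simp
qed

text \<open>Adding \<open>1 - c\<close> times the unit columns turns \<open>c I\<^sub>k\<close> into \<open>I\<^sub>k\<close>,
  whose pivots then clear the unit block.\<close>

lemma equivalent_mat_scalar_beside_unit_block:
  fixes c :: "'a :: comm_ring_1"
  shows "equivalent_mat
    (four_block_mat (c \<cdot>\<^sub>m 1\<^sub>m (k + b)) (four_block_mat (1\<^sub>m k) (0\<^sub>m k l) (0\<^sub>m b k) (0\<^sub>m b l))
       (0\<^sub>m (k + l) (k + b)) (0\<^sub>m (k + l) (k + l)))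
    (four_block_mat (four_block_mat (1\<^sub>m k) (0\<^sub>m k b) (0\<^sub>m b k) (c \<cdot>\<^sub>m 1\<^sub>m b))
       (0\<^sub>m (k + b) (k + l)) (0\<^sub>m (k + l) (k + b)) (0\<^sub>m (k + l) (k + l)))"
proof -
  let ?D = "four_block_mat (1\<^sub>m k) (0\<^sub>m k l) (0\<^sub>m b k) (0\<^sub>m b l) :: 'a mat"
  let ?E = "four_block_mat (1\<^sub>m k) (0\<^sub>m k b) (0\<^sub>m l k) (0\<^sub>m l b) :: 'a mat"
  let ?S = "four_block_mat (1\<^sub>m k) (0\<^sub>m k b) (0\<^sub>m b k) (c \<cdot>\<^sub>m 1\<^sub>m b)"
  have cI: "c \<cdot>\<^sub>m 1\<^sub>m (k + b) \<in> carrier_mat (k + b) (k + b)"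
    and D: "?D \<in> carrier_mat (k + b) (k + l)" and E: "?E \<in> carrier_mat (k + l) (k + b)"
    and S: "?S \<in> carrier_mat (k + b) (k + b)"
    by auto
  have "?D * ?E = four_block_mat (1\<^sub>m k) (0\<^sub>m k b) (0\<^sub>m b k) (0\<^sub>m b b)"
    by (subst mult_four_block_mat[of _ k k _ l _ b _ _ k _ b]) auto
  then have S_eq: "c \<cdot>\<^sub>m 1\<^sub>m (k + b) + ?D * ((1 - c) \<cdot>\<^sub>m ?E) = ?S"
    unfolding mult_smult_distrib[OF D E] by (intro eq_matI) auto
  have "?S * ?D = ?D"
    by (subst mult_four_block_mat[of _ k k _ b _ b _ _ k _ l]) auto
  then have D_eq: "?D + - (?S * ?D) = 0\<^sub>m (k + b) (k + l)"
    using D by auto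
  have "equivalent_mat (four_block_mat (c \<cdot>\<^sub>m 1\<^sub>m (k + b)) ?D (0\<^sub>m (k + l) (k + b)) (0\<^sub>m (k + l) (k + l)))
      (four_block_mat ?S ?D (0\<^sub>m (k + l) (k + b)) (0\<^sub>m (k + l) (k + l)))"
    using equivalent_mat_add_cols_left[OF cI D zero_carrier_mat zero_carrier_mat, where Y = "(1 - c) \<cdot>\<^sub>m ?E"] E
    by (simp add: S_eq)
  also have "equivalent_mat \<dots>
      (four_block_mat ?S (0\<^sub>m (k + b) (k + l)) (0\<^sub>m (k + l) (k + b)) (0\<^sub>m (k + l) (k + l)))"
    using equivalent_mat_add_cols_right[OF S D zero_carrier_mat[of "k + l" "k + b"] zero_carrier_mat, where Y = "- ?D"] D
    by (simp add: D_eq)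
  finally show ?thesis .
qed

section \<open>Incidence matrices of complete graphs\<close>

primrec tri :: "nat \<Rightarrow> nat" where
  "tri 0 = 0"
| "tri (Suc k) = Suc k + tri k"

lemma tri_eq: "tri k = (k + 1) * k div 2"
  by (induction k) auto

lemma tri_eq_add_tri_pred: "tri k = k + tri (k - 1)"
  by (cases k) auto

text \<open>\<open>X_ext k\<close> is the paper's \<open>X\<^sub>k\<^sub>+\<^sub>1\<close>; starting the recursion at the empty
  \<open>0 \<times> 1\<close> matrix \<open>X\<^sub>1\<close> makes \<open>X\<^sub>2\<close> an instance of the recursive step.\<close>

primrec X_ext :: "nat \<Rightarrow> int mat" where
  "X_ext 0 = 0\<^sub>m 0 1"
| "X_ext (Suc k) = four_block_mat (ones_mat (k + 1) 1) (- 1\<^sub>m (k + 1)) (0\<^sub>m (tri k) 1) (X_ext k)"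

lemma X_ext_carrier: "X_ext k \<in> carrier_mat (tri k) (k + 1)"
  by (induction k) auto

lemma X_aux_eq_X_ext: "X_aux k = X_ext (Suc k)"
proof (induction k)
  case 0
  show ?case by (rule eq_matI) auto
next
  case (Suc k)
  then show ?case
    by (simp add: tri_eq algebra_simps)
qed

lemma X_ext_mult_ones: "X_ext k * ones_mat (k + 1) 1 = 0\<^sub>m (tri k) 1"
proof (induction k)
  case 0
  show ?case by (rule eq_matI) auto
next
  case (Suc k)
  have ones_split: "ones_mat (Suc k + 1) 1 = four_block_mat (ones_mat 1 1) (0\<^sub>m 1 0) (ones_mat (k + 1) 1) (0\<^sub>m (k + 1) 0)"
    by (rule eq_matI) auto
  have "X_ext (Suc k) * ones_mat (Suc k + 1) 1
    = four_block_mat (ones_mat (k + 1) 1 * ones_mat 1 1 + - 1\<^sub>m (k + 1) * ones_mat (k + 1) 1)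
        (ones_mat (k + 1) 1 * 0\<^sub>m 1 0 + - 1\<^sub>m (k + 1) * 0\<^sub>m (k + 1) 0)
        (0\<^sub>m (tri k) 1 * ones_mat 1 1 + X_ext k * ones_mat (k + 1) 1)
        (0\<^sub>m (tri k) 1 * 0\<^sub>m 1 0 + X_ext k * 0\<^sub>m (k + 1) 0)"
    unfolding X_ext.simps ones_split by (rule mult_four_block_mat) (use X_ext_carrier[of k] in auto)
  also have "\<dots> = 0\<^sub>m (tri (Suc k)) 1"
    using Suc X_ext_carrier[of k] by (auto simp: ones_mat_mult)
  finally show ?case .
qed

lemma ones_mat_mult_transpose_X_ext: "ones_mat (k + 1) (k + 1) * transpose_mat (X_ext k) = 0\<^sub>m (k + 1) (tri k)"
proof -
  have Y: "X_ext k \<in> carrier_mat (tri k) (k + 1)" by (rule X_ext_carrier)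
  have "ones_mat 1 (k + 1) * transpose_mat (X_ext k) = transpose_mat (X_ext k * ones_mat (k + 1) 1)"
    by (subst transpose_mult[OF Y]) (auto simp: transpose_ones_mat)
  also have "\<dots> = 0\<^sub>m 1 (tri k)"
    by (simp only: X_ext_mult_ones zero_transpose_mat)
  finally have "ones_mat 1 (k + 1) * transpose_mat (X_ext k) = 0\<^sub>m 1 (tri k)" .
  moreover have "ones_mat (k + 1) (k + 1) = (ones_mat (k + 1) 1 * ones_mat 1 (k + 1) :: int mat)"
    by (intro eq_matI) (auto simp: scalar_prod_def)
  ultimately show ?thesis
    using Y by (simp add: assoc_mult_mat[of _ "k + 1" 1 _ "k + 1" _ "tri k"])
qed

lemma transpose_X_ext_Suc:
  "transpose_mat (X_ext (Suc k))
    = four_block_mat (ones_mat 1 (k + 1)) (0\<^sub>m 1 (tri k)) (- 1\<^sub>m (k + 1)) (transpose_mat (X_ext k))"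
  using X_ext_carrier[of k]
  by (simp add: transpose_four_block_mat[of _ "k + 1" 1 _ "k + 1" _ "tri k"] transpose_uminus transpose_ones_mat)

lemma X_ext_gram:
  "transpose_mat (X_ext k) * X_ext k = of_nat (k + 1) \<cdot>\<^sub>m 1\<^sub>m (k + 1) - ones_mat (k + 1) (k + 1)"
proof (induction k)
  case 0
  show ?case by (rule eq_matI) auto
next
  case (Suc k)
  have Y: "X_ext k \<in> carrier_mat (tri k) (k + 1)" by (rule X_ext_carrier)
  have "transpose_mat (X_ext (Suc k)) * X_ext (Suc k)
    = four_block_mat
        (ones_mat 1 (k + 1) * ones_mat (k + 1) 1 + 0\<^sub>m 1 (tri k) * 0\<^sub>m (tri k) 1)
        (ones_mat 1 (k + 1) * - 1\<^sub>m (k + 1) + 0\<^sub>m 1 (tri k) * X_ext k)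
        (- 1\<^sub>m (k + 1) * ones_mat (k + 1) 1 + transpose_mat (X_ext k) * 0\<^sub>m (tri k) 1)
        (- 1\<^sub>m (k + 1) * - 1\<^sub>m (k + 1) + transpose_mat (X_ext k) * X_ext k)"
    unfolding transpose_X_ext_Suc unfolding X_ext.simps by (rule mult_four_block_mat) (use Y in auto)
  also have "\<dots> = of_nat (Suc k + 1) \<cdot>\<^sub>m 1\<^sub>m (Suc k + 1) - ones_mat (Suc k + 1) (Suc k + 1)"
    unfolding Suc using Y by (intro eq_matI) (auto simp: ones_mat_mult)
  finally show ?case .
qed

lemma scalar_minus_X_ext_Suc_mult_transpose:
  "of_nat (k + 2) \<cdot>\<^sub>m 1\<^sub>m (tri (Suc k)) - X_ext (Suc k) * transpose_mat (X_ext (Suc k))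
    = four_block_mat (transpose_mat (X_ext k) * X_ext k) (transpose_mat (X_ext k)) (X_ext k)
        (of_nat (k + 2) \<cdot>\<^sub>m 1\<^sub>m (tri k) - X_ext k * transpose_mat (X_ext k))"
proof -
  have Y: "X_ext k \<in> carrier_mat (tri k) (k + 1)" by (rule X_ext_carrier)
  have "X_ext (Suc k) * transpose_mat (X_ext (Suc k))
    = four_block_mat
        (ones_mat (k + 1) 1 * ones_mat 1 (k + 1) + - 1\<^sub>m (k + 1) * - 1\<^sub>m (k + 1))
        (ones_mat (k + 1) 1 * 0\<^sub>m 1 (tri k) + - 1\<^sub>m (k + 1) * transpose_mat (X_ext k))
        (0\<^sub>m (tri k) 1 * ones_mat 1 (k + 1) + X_ext k * - 1\<^sub>m (k + 1))
        (0\<^sub>m (tri k) 1 * 0\<^sub>m 1 (tri k) + X_ext k * transpose_mat (X_ext k))"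
    unfolding transpose_X_ext_Suc unfolding X_ext.simps by (rule mult_four_block_mat) (use Y in auto)
  then show ?thesis
    using Y by (intro eq_matI) (auto simp: X_ext_gram ones_mat_mult)
qed

lemma equivalent_mat_X_ext_smith:
  assumes "tri k = k + b"
  shows "equivalent_mat (X_ext k) (four_block_mat (1\<^sub>m k) (0\<^sub>m k 1) (0\<^sub>m b k) (0\<^sub>m b 1))"
proof (cases k)
  case 0
  then have "X_ext k = four_block_mat (1\<^sub>m k) (0\<^sub>m k 1) (0\<^sub>m b k) (0\<^sub>m b 1)"
    using assms by (intro eq_matI) auto
  then show ?thesis
    by (simp add: equivalent_mat_refl)
next
  case (Suc j)
  then have b: "b = tri j"
    using assms by simp
  have Z: "X_ext j \<in> carrier_mat b (j + 1)"
    unfolding b by (rule X_ext_carrier)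
  have u: "ones_mat (j + 1) 1 \<in> carrier_mat (j + 1) 1" by simp
  have "equivalent_mat (X_ext k) (four_block_mat (0\<^sub>m (j + 1) 1) (- 1\<^sub>m (j + 1)) (0\<^sub>m b 1) (X_ext j))"
    using X_ext_mult_ones[of j] equivalent_mat_add_cols_left[OF u _ zero_carrier_mat Z u, of "- 1\<^sub>m (j + 1)"] Z
    unfolding Suc b by simp
  also have "equivalent_mat \<dots> (four_block_mat (0\<^sub>m (j + 1) 1) (- 1\<^sub>m (j + 1)) (0\<^sub>m b 1) (0\<^sub>m b (j + 1)))"
    using equivalent_mat_add_rows_down[OF zero_carrier_mat _ zero_carrier_mat Z Z, of "- 1\<^sub>m (j + 1)"] Z
    by auto
  also have "equivalent_mat \<dots> (- \<dots>)"
    by (rule equivalent_mat_uminus[of _ "j + 1 + b" "1 + (j + 1)"]) auto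
  also have "- four_block_mat (0\<^sub>m (j + 1) 1) (- 1\<^sub>m (j + 1)) (0\<^sub>m b 1) (0\<^sub>m b (j + 1))
      = (four_block_mat (0\<^sub>m (j + 1) 1) (1\<^sub>m (j + 1)) (0\<^sub>m b 1) (0\<^sub>m b (j + 1)) :: int mat)"
    by (rule eq_matI) auto
  also have "equivalent_mat \<dots> (four_block_mat (1\<^sub>m k) (0\<^sub>m k 1) (0\<^sub>m b k) (0\<^sub>m b 1))"
    unfolding Suc
    using equivalent_mat_swap_block_cols[of "0\<^sub>m (j + 1) 1" "j + 1" 1 "1\<^sub>m (j + 1)" "j + 1"
        "0\<^sub>m b 1" b "0\<^sub>m b (j + 1)"]
    by simp
  finally show ?thesis .
qed

lemma equivalent_mat_X_ext_complement:
  fixes k :: nat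
  defines "Y \<equiv> X_ext k"
  shows "equivalent_mat
    (four_block_mat (transpose_mat Y * Y) (transpose_mat Y) Y (of_nat (k + 2) \<cdot>\<^sub>m 1\<^sub>m (tri k) - Y * transpose_mat Y))
    (four_block_mat (0\<^sub>m (k + 1) (k + 1)) (0\<^sub>m (k + 1) (tri k)) Y (of_nat (k + 2) \<cdot>\<^sub>m 1\<^sub>m (tri k)))"
proof -
  have Y: "Y \<in> carrier_mat (tri k) (k + 1)" unfolding Y_def by (rule X_ext_carrier)
  have YT: "transpose_mat Y \<in> carrier_mat (k + 1) (tri k)" using Y by simp
  have G: "transpose_mat Y * Y \<in> carrier_mat (k + 1) (k + 1)" using Y by simp
  have nI: "of_nat (k + 2) \<cdot>\<^sub>m 1\<^sub>m (tri k) \<in> carrier_mat (tri k) (tri k)" by simp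
  have B: "of_nat (k + 2) \<cdot>\<^sub>m 1\<^sub>m (tri k) - Y * transpose_mat Y \<in> carrier_mat (tri k) (tri k)"
    using Y by (simp add: minus_carrier_mat)
  have "transpose_mat Y * Y * transpose_mat Y
      = of_nat (k + 1) \<cdot>\<^sub>m transpose_mat Y - ones_mat (k + 1) (k + 1) * transpose_mat Y"
    using Y unfolding Y_def X_ext_gram
    by (simp add: minus_mult_distrib_mat[of _ "k + 1" "k + 1"] mult_smult_assoc_mat[of _ "k + 1" "k + 1"])
  also have "\<dots> = of_nat (k + 1) \<cdot>\<^sub>m transpose_mat Y"
    unfolding Y_def ones_mat_mult_transpose_X_ext using X_ext_carrier[of k] by (intro eq_matI) auto
  finally have "transpose_mat Y * Y * transpose_mat Y = of_nat (k + 1) \<cdot>\<^sub>m transpose_mat Y" .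
  then have "transpose_mat Y + transpose_mat Y * Y * transpose_mat Y = of_nat (k + 2) \<cdot>\<^sub>m transpose_mat Y"
    using Y by (intro eq_matI) (auto simp: algebra_simps)
  moreover have "of_nat (k + 2) \<cdot>\<^sub>m 1\<^sub>m (tri k) - Y * transpose_mat Y + Y * transpose_mat Y
      = of_nat (k + 2) \<cdot>\<^sub>m 1\<^sub>m (tri k)"
    using Y by (intro eq_matI) auto
  ultimately have "equivalent_mat
    (four_block_mat (transpose_mat Y * Y) (transpose_mat Y) Y (of_nat (k + 2) \<cdot>\<^sub>m 1\<^sub>m (tri k) - Y * transpose_mat Y))
    (four_block_mat (transpose_mat Y * Y) (of_nat (k + 2) \<cdot>\<^sub>m transpose_mat Y) Y
       (of_nat (k + 2) \<cdot>\<^sub>m 1\<^sub>m (tri k)))"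
    using Y equivalent_mat_add_cols_right[OF G YT Y B YT]
    by simp
  also have "equivalent_mat \<dots>
    (four_block_mat (0\<^sub>m (k + 1) (k + 1)) (0\<^sub>m (k + 1) (tri k)) Y (of_nat (k + 2) \<cdot>\<^sub>m 1\<^sub>m (tri k)))"
  proof -
    have "transpose_mat Y * Y + - transpose_mat Y * Y = 0\<^sub>m (k + 1) (k + 1)"
      using Y by (intro eq_matI) auto
    moreover have "of_nat (k + 2) \<cdot>\<^sub>m transpose_mat Y + - transpose_mat Y * (of_nat (k + 2) \<cdot>\<^sub>m 1\<^sub>m (tri k))
        = 0\<^sub>m (k + 1) (tri k)"
      using Y by (intro eq_matI) (auto simp: mult_smult_distrib[of _ "k + 1" "tri k"])
    ultimately show ?thesis
      using Y equivalent_mat_add_rows_up[OF G _ Y nI, of "of_nat (k + 2) \<cdot>\<^sub>m transpose_mat Y" "- transpose_mat Y"]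
      by simp
  qed
  finally show ?thesis .
qed

lemma equivalent_mat_X_ext_beside_scalar:
  fixes c :: int
  assumes b: "tri k = k + b"
  shows "equivalent_mat
    (four_block_mat (0\<^sub>m (k + 1) (k + 1)) (0\<^sub>m (k + 1) (tri k)) (X_ext k) (c \<cdot>\<^sub>m 1\<^sub>m (tri k)))
    (four_block_mat (four_block_mat (1\<^sub>m k) (0\<^sub>m k b) (0\<^sub>m b k) (c \<cdot>\<^sub>m 1\<^sub>m b))
       (0\<^sub>m (tri k) (k + 1)) (0\<^sub>m (k + 1) (tri k)) (0\<^sub>m (k + 1) (k + 1)))"
proof -
  have Y: "X_ext k \<in> carrier_mat (tri k) (k + 1)" by (rule X_ext_carrier)
  have cI: "c \<cdot>\<^sub>m 1\<^sub>m (tri k) \<in> carrier_mat (tri k) (tri k)" by simp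
  have "equivalent_mat
      (four_block_mat (0\<^sub>m (k + 1) (k + 1)) (0\<^sub>m (k + 1) (tri k)) (X_ext k) (c \<cdot>\<^sub>m 1\<^sub>m (tri k)))
      (four_block_mat (X_ext k) (c \<cdot>\<^sub>m 1\<^sub>m (tri k)) (0\<^sub>m (k + 1) (k + 1)) (0\<^sub>m (k + 1) (tri k)))"
    by (rule equivalent_mat_swap_block_rows[OF zero_carrier_mat zero_carrier_mat Y cI])
  also have "equivalent_mat \<dots>
      (four_block_mat (c \<cdot>\<^sub>m 1\<^sub>m (tri k)) (X_ext k) (0\<^sub>m (k + 1) (tri k)) (0\<^sub>m (k + 1) (k + 1)))"
    by (rule equivalent_mat_swap_block_cols[OF Y cI zero_carrier_mat zero_carrier_mat])
  also have "equivalent_mat \<dots>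
      (four_block_mat (c \<cdot>\<^sub>m 1\<^sub>m (tri k)) (four_block_mat (1\<^sub>m k) (0\<^sub>m k 1) (0\<^sub>m b k) (0\<^sub>m b 1))
         (0\<^sub>m (k + 1) (tri k)) (0\<^sub>m (k + 1) (k + 1)))"
    by (rule equivalent_mat_scalar_block_cong[OF equivalent_mat_X_ext_smith[OF b] Y])
  also have "equivalent_mat \<dots>
      (four_block_mat (four_block_mat (1\<^sub>m k) (0\<^sub>m k b) (0\<^sub>m b k) (c \<cdot>\<^sub>m 1\<^sub>m b))
         (0\<^sub>m (tri k) (k + 1)) (0\<^sub>m (k + 1) (tri k)) (0\<^sub>m (k + 1) (k + 1)))"
    unfolding b by (rule equivalent_mat_scalar_beside_unit_block)
  finally show ?thesis .
qed

lemma A_mat_eq: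
  "A_mat (k + 2) = - four_block_mat (1\<^sub>m (k + 2)) (transpose_mat (X_ext (Suc k))) (X_ext (Suc k))
     (of_nat (k + 2) \<cdot>\<^sub>m 1\<^sub>m (tri (Suc k)))"
proof -
  have "(k + 2) * (k + 2 - 1) div 2 = tri (Suc k)"
    by (simp add: tri_eq algebra_simps)
  then show ?thesis
    unfolding A_mat_def X_mat_def using X_ext_carrier[of "Suc k"]
    by (intro eq_matI) (auto simp: X_aux_eq_X_ext simp del: X_ext.simps)
qed

lemma equivalent_mat_A_mat:
  "equivalent_mat (A_mat (k + 2))
    (four_block_mat (1\<^sub>m (k + 2)) (0\<^sub>m (k + 2) (tri (Suc k))) (0\<^sub>m (tri (Suc k)) (k + 2))
       (four_block_mat (0\<^sub>m (k + 1) (k + 1)) (0\<^sub>m (k + 1) (tri k)) (X_ext k)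
          (of_nat (k + 2) \<cdot>\<^sub>m 1\<^sub>m (tri k))))"
proof -
  have X: "X_ext (Suc k) \<in> carrier_mat (tri (Suc k)) (k + 2)"
    using X_ext_carrier[of "Suc k"] by simp
  have nI: "of_nat (k + 2) \<cdot>\<^sub>m 1\<^sub>m (tri (Suc k)) \<in> carrier_mat (tri (Suc k)) (tri (Suc k))"
    by simp
  have "equivalent_mat (A_mat (k + 2)) (- A_mat (k + 2))"
    unfolding A_mat_eq using X
    by (intro equivalent_mat_uminus[of _ "k + 2 + tri (Suc k)" "k + 2 + tri (Suc k)"]) auto
  also have "- A_mat (k + 2) = four_block_mat (1\<^sub>m (k + 2)) (transpose_mat (X_ext (Suc k))) (X_ext (Suc k))
     (of_nat (k + 2) \<cdot>\<^sub>m 1\<^sub>m (tri (Suc k)))"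
    unfolding A_mat_eq by simp
  also have "equivalent_mat \<dots>
      (four_block_mat (1\<^sub>m (k + 2)) (0\<^sub>m (k + 2) (tri (Suc k))) (0\<^sub>m (tri (Suc k)) (k + 2))
         (of_nat (k + 2) \<cdot>\<^sub>m 1\<^sub>m (tri (Suc k)) - X_ext (Suc k) * transpose_mat (X_ext (Suc k))))"
    using X by (intro equivalent_mat_schur_complement[OF _ X nI]) auto
  also have "equivalent_mat \<dots>
      (four_block_mat (1\<^sub>m (k + 2)) (0\<^sub>m (k + 2) (tri (Suc k))) (0\<^sub>m (tri (Suc k)) (k + 2))
       (four_block_mat (0\<^sub>m (k + 1) (k + 1)) (0\<^sub>m (k + 1) (tri k)) (X_ext k)
          (of_nat (k + 2) \<cdot>\<^sub>m 1\<^sub>m (tri k))))"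
    unfolding scalar_minus_X_ext_Suc_mult_transpose
    using X_ext_carrier[of k]
    by (intro equivalent_mat_block_diag[OF equivalent_mat_refl equivalent_mat_X_ext_complement one_carrier_mat])
      auto
  finally show ?thesis .
qed

lemma snf_target_eq:
  fixes k :: nat
  defines "b \<equiv> tri (k - 1)"
  shows "snf_target (k + 2) =
    four_block_mat (1\<^sub>m (k + 2)) (0\<^sub>m (k + 2) (tri (Suc k))) (0\<^sub>m (tri (Suc k)) (k + 2))
      (four_block_mat (four_block_mat (1\<^sub>m k) (0\<^sub>m k b) (0\<^sub>m b k) (of_nat (k + 2) \<cdot>\<^sub>m 1\<^sub>m b))
         (0\<^sub>m (tri k) (k + 1)) (0\<^sub>m (k + 1) (tri k)) (0\<^sub>m (k + 1) (k + 1)))"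
proof -
  have b: "tri k = k + b"
    unfolding b_def by (rule tri_eq_add_tri_pred)
  have size: "(k + 2) * (k + 2 - 1) div 2 = Suc k + (k + b)"
    using tri_eq[of "Suc k"] b by (simp add: algebra_simps)
  have units: "2 * (k + 2) - 2 = k + 2 + k"
    by simp
  have multiples: "(k + 2 - 2) * (k + 2 - 3) div 2 = b"
    unfolding b_def tri_eq by (cases k) auto
  show ?thesis
    unfolding snf_target_def size units multiples tri.simps(2) b
    by (rule eq_matI) auto
qed

lemma in_smith_form_snf_target: "in_smith_form (snf_target n)"
  unfolding in_smith_form_def snf_target_def by auto

lemma is_smith_normal_form_ofI:
  assumes "equivalent_mat A D" "in_smith_form D"
  shows "is_smith_normal_form_of A D"
  using assms unfolding is_smith_normal_form_of_def equivalent_mat_def by auto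

lemma equivalent_mat_A_mat_snf_target: "equivalent_mat (A_mat (k + 2)) (snf_target (k + 2))"
  unfolding snf_target_eq using X_ext_carrier[of k]
  by (intro equivalent_mat_trans[OF equivalent_mat_A_mat] equivalent_mat_block_diag[OF equivalent_mat_refl
        equivalent_mat_X_ext_beside_scalar[OF tri_eq_add_tri_pred] one_carrier_mat]) auto

theorem theorem4p4:
  fixes n :: nat
  assumes "n \<ge> 2"
  shows "is_smith_normal_form_of (A_mat n) (snf_target n)"
proof -
  obtain k where "n = k + 2"
    using assms by (metis add.commute le_Suc_ex)
  then show ?thesis
    using equivalent_mat_A_mat_snf_target in_smith_form_snf_target by (simp add: is_smith_normal_form_ofI)
qed

end
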